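(* Let $\phi=\tilde p/p$ be an irreducible rational inner function on $\mathbb{D}^3$ of degree $(m,n,1)$ with $p(z)=p_1(z_1,z_2)+z_3p_2(z_1,z_2)$, $\tilde p(z)=z_3\tilde p_1(z_1,z_2)+\tilde p_2(z_1,z_2)$, and suppose $\mathcal{Z}_p\cap\mathbb{T}^3$ is finite. Then for each $(\tau_1,\tau_2,\zeta_3)\in\mathcal{Z}_p\cap\mathbb{T}^3$, \[\phi^*(\tau_1,\tau_2,\tau_3)=\frac{\tilde p_2(\tau_1,\tau_2)}{p_1(\tau_1,\tau_2)}\in\mathbb{T}\quad\text{for all }\tau_3\in\mathbb{T},\] where $\phi^*$ denotes the nontangential limit of $\phi$.
   Context: A rational inner function (RIF) on $\mathbb{D}^3$ is a rational function holomorphic on the tridisk with unimodular radial limits a.e. on $\mathbb{T}^3$; it is written $\phi=\tilde p/p$ with $p$ zero-free on $\mathbb{D}^3$, $p,\tilde p$ without common factors. For degree $(m,n,1)$, $\tilde p(z)=z_1^mz_2^nz_3\overline{p(1/\bar z_1,1/\bar z_2,1/\bar z_3)}$ and $\tilde p_j(z_1,z_2)=z_1^mz_2^n\overline{p_j(1/\bar z_1,1/\bar z_2)}$. The nontangential limit $\phi^*(\tau)$ at $\tau\in\mathbb{T}^3$ is the limit as $z\to\tau$ in $\mathbb{D}^3$ with $\|z-\tau\|\le C(1-\|z\|)$; it exists and is unimodular at every $\tau\in\mathbb{T}^3$ for every RIF. $\mathcal{Z}_p$ is the zero set of $p$. *)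

theory Defs
  imports "HOL-Analysis.Analysis"
begin

text \<open>Polynomials in three complex variables are represented by their coefficient
  functions (finitely supported); polynomials in two variables likewise.
  Points of C^3 are triples.\<close>

type_synonym cpoly2 = "nat \<Rightarrow> nat \<Rightarrow> complex"
type_synonym cpoly3 = "nat \<Rightarrow> nat \<Rightarrow> nat \<Rightarrow> complex"
type_synonym cpt3 = "complex \<times> complex \<times> complex"

definition supp3 :: "cpoly3 \<Rightarrow> (nat \<times> nat \<times> nat) set" where
  "supp3 c = {(i,j,k). c i j k \<noteq> 0}"

definition is_poly3 :: "cpoly3 \<Rightarrow> bool" where
  "is_poly3 c \<longleftrightarrow> finite (supp3 c)"

definition supp2 :: "cpoly2 \<Rightarrow> (nat \<times> nat) set" where
  "supp2 c = {(i,j). c i j \<noteq> 0}"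

definition is_poly2 :: "cpoly2 \<Rightarrow> bool" where
  "is_poly2 c \<longleftrightarrow> finite (supp2 c)"

definition eval3 :: "cpoly3 \<Rightarrow> cpt3 \<Rightarrow> complex" where
  "eval3 c z = (case z of (z1,z2,z3) \<Rightarrow>
     (\<Sum>(i,j,k)\<in>supp3 c. c i j k * z1 ^ i * z2 ^ j * z3 ^ k))"

definition eval2 :: "cpoly2 \<Rightarrow> complex \<Rightarrow> complex \<Rightarrow> complex" where
  "eval2 c z1 z2 = (\<Sum>(i,j)\<in>supp2 c. c i j * z1 ^ i * z2 ^ j)"

definition deg3 :: "cpoly3 \<Rightarrow> nat \<times> nat \<times> nat" where
  "deg3 c = (Max ({0} \<union> (\<lambda>(i,j,k). i) ` supp3 c),
             Max ({0} \<union> (\<lambda>(i,j,k). j) ` supp3 c),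
             Max ({0} \<union> (\<lambda>(i,j,k). k) ` supp3 c))"

definition deg_le3 :: "cpoly3 \<Rightarrow> nat \<Rightarrow> nat \<Rightarrow> nat \<Rightarrow> bool" where
  "deg_le3 c m n l \<longleftrightarrow> (\<forall>(i,j,k)\<in>supp3 c. i \<le> m \<and> j \<le> n \<and> k \<le> l)"

definition deg_le2 :: "cpoly2 \<Rightarrow> nat \<Rightarrow> nat \<Rightarrow> bool" where
  "deg_le2 c m n \<longleftrightarrow> (\<forall>(i,j)\<in>supp2 c. i \<le> m \<and> j \<le> n)"

text \<open>Reflections: coefficientwise form of
  z1^m z2^n z3^l conj(p(1/conj z1, 1/conj z2, 1/conj z3)).\<close>
definition refl3 :: "nat \<Rightarrow> nat \<Rightarrow> nat \<Rightarrow> cpoly3 \<Rightarrow> cpoly3" where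
  "refl3 m n l c = (\<lambda>i j k. if i \<le> m \<and> j \<le> n \<and> k \<le> l
                           then cnj (c (m - i) (n - j) (l - k)) else 0)"

definition refl2 :: "nat \<Rightarrow> nat \<Rightarrow> cpoly2 \<Rightarrow> cpoly2" where
  "refl2 m n c = (\<lambda>i j. if i \<le> m \<and> j \<le> n then cnj (c (m - i) (n - j)) else 0)"

definition lin3 :: "cpoly2 \<Rightarrow> cpoly2 \<Rightarrow> cpoly3" where
  "lin3 p1 p2 = (\<lambda>i j k. if k = 0 then p1 i j else if k = 1 then p2 i j else 0)"

definition nonconst3 :: "cpoly3 \<Rightarrow> bool" where
  "nonconst3 c \<longleftrightarrow> supp3 c - {(0,0,0)} \<noteq> {}"

definition irreducible3 :: "cpoly3 \<Rightarrow> bool" where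
  "irreducible3 c \<longleftrightarrow> nonconst3 c \<and>
     (\<forall>f g. is_poly3 f \<and> is_poly3 g \<and> (\<forall>z. eval3 c z = eval3 f z * eval3 g z)
        \<longrightarrow> \<not> nonconst3 f \<or> \<not> nonconst3 g)"

definition common_factor3 :: "cpoly3 \<Rightarrow> cpoly3 \<Rightarrow> bool" where
  "common_factor3 p q \<longleftrightarrow> (\<exists>f g h. is_poly3 f \<and> is_poly3 g \<and> is_poly3 h \<and> nonconst3 f \<and>
     (\<forall>z. eval3 p z = eval3 f z * eval3 g z) \<and> (\<forall>z. eval3 q z = eval3 f z * eval3 h z))"

definition polydisc3 :: "cpt3 set" where
  "polydisc3 = {(z1,z2,z3). norm z1 < 1 \<and> norm z2 < 1 \<and> norm z3 < 1}"

definition torus3 :: "cpt3 set" where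
  "torus3 = {(z1,z2,z3). norm z1 = 1 \<and> norm z2 = 1 \<and> norm z3 = 1}"

definition maxnorm3 :: "cpt3 \<Rightarrow> real" where
  "maxnorm3 z = (case z of (z1,z2,z3) \<Rightarrow> max (norm z1) (max (norm z2) (norm z3)))"

definition nt_region :: "real \<Rightarrow> cpt3 \<Rightarrow> cpt3 set" where
  "nt_region C \<tau> = {z \<in> polydisc3. maxnorm3 (z - \<tau>) \<le> C * (1 - maxnorm3 z)}"

definition nt_limit :: "(cpt3 \<Rightarrow> complex) \<Rightarrow> cpt3 \<Rightarrow> complex \<Rightarrow> bool" where
  "nt_limit f \<tau> L \<longleftrightarrow> (\<forall>C>0. (f \<longlongrightarrow> L) (at \<tau> within nt_region C \<tau>))"

end

(*
  On the bidisk, zero-freeness of p = p_1 + z_3 p_2 forces |p_2| <= |p_1| and p_1 <> 0, and by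
  continuity |p_2| <= |p_1| on the torus.  At a zero (tau_1, tau_2, zeta_3) on the torus
  p_1 + zeta_3 p_2 = 0, and p_1(tau_1, tau_2) <> 0 since otherwise the whole circle
  {(tau_1, tau_2)} x T would consist of zeros; hence |p_2| = |p_1| there and L = \tilde p_2 / p_1
  is unimodular.  Writing phi = (\tilde p_2 + z_3 \tilde p_1) / (p_1 + z_3 p_2),
    phi - L = (\tilde p_1 - L p_2) / p_2 - E / (p_2 (p_1 + z_3 p_2)),   E = p_1 \tilde p_1 - p_2 \tilde p_2.
  The first term tends to 0.  For the second, |p_1 + z_3 p_2| >= (1 - |z|_oo) |p_1|, while on the
  torus E conj(z_1^m z_2^n) = |p_1|^2 - |p_2|^2 >= 0: so E, which vanishes at (tau_1, tau_2),
  has a critical point there along both coordinate circles and thus vanishes to second order.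
  In a nontangential region |z - tau| = O(1 - |z|_oo), so the second term is O(1 - |z|_oo).
*)
theory Submission
  imports Defs
begin

lemma eval2_eq_sum_superset:
  assumes "finite A" "supp2 c \<subseteq> A"
  shows "eval2 c x y = (\<Sum>(i,j)\<in>A. c i j * x^i * y^j)"
  unfolding eval2_def
  by (rule sum.mono_neutral_left) (use assms in \<open>auto simp: supp2_def\<close>)

lemma eval3_eq_sum_superset:
  assumes "finite A" "supp3 c \<subseteq> A"
  shows "eval3 c (x,y,w) = (\<Sum>(i,j,k)\<in>A. c i j k * x^i * y^j * w^k)"
  unfolding eval3_def
  by simp (rule sum.mono_neutral_left, use assms in \<open>auto simp: supp3_def\<close>)

lemma eval3_lin3:
  assumes "is_poly2 a" "is_poly2 b"
  shows "eval3 (lin3 a b) (x,y,w) = eval2 a x y + w * eval2 b x y"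
proof -
  define S where "S = supp2 a \<union> supp2 b"
  have S: "finite S" "supp2 a \<subseteq> S" "supp2 b \<subseteq> S"
    using assms by (auto simp: S_def is_poly2_def)
  define A0 where "A0 = (\<lambda>(i,j). (i,j,0::nat)) ` S"
  define A1 where "A1 = (\<lambda>(i,j). (i,j,1::nat)) ` S"
  let ?t = "\<lambda>(i,j,k). lin3 a b i j k * x^i * y^j * w^k"
  have "supp3 (lin3 a b) \<subseteq> A0 \<union> A1"
    by (auto simp: supp3_def lin3_def A0_def A1_def S_def supp2_def split: if_splits)
  moreover have "finite (A0 \<union> A1)"
    using S(1) by (simp add: A0_def A1_def)
  ultimately have "eval3 (lin3 a b) (x,y,w) = sum ?t (A0 \<union> A1)"
    by (simp add: eval3_eq_sum_superset)
  also have "\<dots> = sum ?t A0 + sum ?t A1"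
    using S(1) by (intro sum.union_disjoint) (auto simp: A0_def A1_def)
  also have "sum ?t A0 = eval2 a x y"
    unfolding A0_def eval2_eq_sum_superset[OF S(1,2)]
    by (subst sum.reindex) (auto simp: inj_on_def lin3_def intro!: sum.cong)
  also have "sum ?t A1 = w * eval2 b x y"
    unfolding A1_def eval2_eq_sum_superset[OF S(1,3)]
    by (subst sum.reindex) (auto simp: inj_on_def lin3_def sum_distrib_left intro!: sum.cong)
  finally show ?thesis .
qed

lemma refl3_lin3: "refl3 m n 1 (lin3 a b) = lin3 (refl2 m n b) (refl2 m n a)"
  by (auto simp: fun_eq_iff refl3_def lin3_def refl2_def)

lemma is_poly2_refl2: "is_poly2 (refl2 m n c)"
proof -
  have "supp2 (refl2 m n c) \<subseteq> {..m} \<times> {..n}"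
    by (auto simp: supp2_def refl2_def split: if_splits)
  then show ?thesis
    unfolding is_poly2_def by (rule finite_subset) auto
qed

lemma eval3_refl3_lin3:
  assumes "is_poly2 a" "is_poly2 b"
  shows "eval3 (refl3 m n 1 (lin3 a b)) (x,y,w) = eval2 (refl2 m n b) x y + w * eval2 (refl2 m n a) x y"
  unfolding refl3_lin3 by (simp add: eval3_lin3 is_poly2_refl2)

lemma mult_cnj_unimodular: "norm w = 1 \<Longrightarrow> w * cnj w = 1"
  by (simp add: complex_mult_cnj cmod_def)

lemma power_diff_unimodular:
  fixes w :: complex
  assumes "norm w = 1" "i \<le> m"
  shows "w ^ (m - i) = w ^ m * cnj w ^ i"
proof -
  have "w ^ i * cnj w ^ i = 1"
    using mult_cnj_unimodular[OF assms(1)] by (metis power_mult_distrib power_one)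
  then show ?thesis
    using assms(2) by (metis le_add_diff_inverse2 mult.assoc mult.right_neutral power_add)
qed

lemma eval2_refl2_unimodular:
  assumes "is_poly2 c" "deg_le2 c m n" "norm x = 1" "norm y = 1"
  shows "eval2 (refl2 m n c) x y = x^m * y^n * cnj (eval2 c x y)"
proof -
  define R where "R = {..m} \<times> {..n}"
  have R: "finite R" "supp2 c \<subseteq> R" "supp2 (refl2 m n c) \<subseteq> R"
    using assms(2) by (auto simp: R_def deg_le2_def supp2_def refl2_def split: if_splits)
  have "eval2 (refl2 m n c) x y = (\<Sum>(i,j)\<in>R. cnj (c i j) * x^(m-i) * y^(n-j))"
    unfolding eval2_eq_sum_superset[OF R(1,3)]
    by (rule sum.reindex_bij_witness[of _ "\<lambda>(i,j). (m-i,n-j)" "\<lambda>(i,j). (m-i,n-j)"])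
       (auto simp: R_def refl2_def)
  also have "\<dots> = (\<Sum>(i,j)\<in>R. x^m * y^n * cnj (c i j * x^i * y^j))"
    by (rule sum.cong) (auto simp: R_def power_diff_unimodular assms(3,4))
  also have "\<dots> = x^m * y^n * cnj (eval2 c x y)"
    by (simp add: eval2_eq_sum_superset[OF R(1,2)] sum_distrib_left case_prod_beta)
  finally show ?thesis .
qed

(* Complex polynomial functions of two variables.  The real-polynomial notion
   polynomial_function of HOL-Analysis would admit cnj, for which poly_fun2_hadamard fails. *)
inductive_set poly_fun2 :: "(complex \<times> complex \<Rightarrow> complex) set" where
  const: "(\<lambda>z. c) \<in> poly_fun2"
| fst: "fst \<in> poly_fun2"
| snd: "snd \<in> poly_fun2"
| add: "f \<in> poly_fun2 \<Longrightarrow> g \<in> poly_fun2 \<Longrightarrow> (\<lambda>z. f z + g z) \<in> poly_fun2"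
| mult: "f \<in> poly_fun2 \<Longrightarrow> g \<in> poly_fun2 \<Longrightarrow> (\<lambda>z. f z * g z) \<in> poly_fun2"

lemma poly_fun2_diff:
  assumes "f \<in> poly_fun2" "g \<in> poly_fun2"
  shows "(\<lambda>z. f z - g z) \<in> poly_fun2"
  using poly_fun2.add[OF assms(1) poly_fun2.mult[OF poly_fun2.const[of "-1"] assms(2)]] by simp

lemma poly_fun2_power: "f \<in> poly_fun2 \<Longrightarrow> (\<lambda>z. f z ^ k) \<in> poly_fun2"
  by (induction k) (auto intro: poly_fun2.intros)

lemma poly_fun2_sum: "(\<And>a. a \<in> A \<Longrightarrow> f a \<in> poly_fun2) \<Longrightarrow> (\<lambda>z. \<Sum>a\<in>A. f a z) \<in> poly_fun2"
  by (induction A rule: infinite_finite_induct) (auto intro: poly_fun2.intros)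

lemma poly_fun2_eval2: "case_prod (eval2 c) \<in> poly_fun2"
proof -
  have "(\<lambda>z. eval2 c (fst z) (snd z)) \<in> poly_fun2"
    unfolding eval2_def
    by (rule poly_fun2_sum) (auto simp: case_prod_beta intro!: poly_fun2.intros poly_fun2_power)
  then show ?thesis
    by (simp add: case_prod_beta')
qed

lemma isCont_poly_fun2: "f \<in> poly_fun2 \<Longrightarrow> isCont f z"
  by (induction rule: poly_fun2.induct) (intro continuous_intros; assumption)+

lemma poly_fun2_hadamard:
  assumes "f \<in> poly_fun2"
  obtains g1 g2 where "g1 \<in> poly_fun2" "g2 \<in> poly_fun2"
    "\<And>x y. f (x,y) = f (a,b) + (x - a) * g1 (x,y) + (y - b) * g2 (x,y)"
proof -
  have "\<exists>g1\<in>poly_fun2. \<exists>g2\<in>poly_fun2. \<forall>x y. f (x,y) = f (a,b) + (x - a) * g1 (x,y) + (y - b) * g2 (x,y)"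
    using assms
  proof (induction rule: poly_fun2.induct)
    case (const c)
    show ?case by (intro bexI[of _ "\<lambda>z. 0"] poly_fun2.intros) simp
  next
    case fst
    show ?case by (intro bexI[of _ "\<lambda>z. 1"] bexI[of _ "\<lambda>z. 0"] poly_fun2.intros) simp
  next
    case snd
    show ?case by (intro bexI[of _ "\<lambda>z. 0"] bexI[of _ "\<lambda>z. 1"] poly_fun2.intros) simp
  next
    case (add f g)
    then obtain f1 f2 g1 g2 where
      parts: "f1 \<in> poly_fun2" "f2 \<in> poly_fun2" "g1 \<in> poly_fun2" "g2 \<in> poly_fun2"
      and f: "\<forall>x y. f (x,y) = f (a,b) + (x - a) * f1 (x,y) + (y - b) * f2 (x,y)"
      and g: "\<forall>x y. g (x,y) = g (a,b) + (x - a) * g1 (x,y) + (y - b) * g2 (x,y)"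
      by blast
    have eq: "f (x,y) + g (x,y)
        = f (a,b) + g (a,b) + (x - a) * (f1 (x,y) + g1 (x,y)) + (y - b) * (f2 (x,y) + g2 (x,y))"
      for x y
      by (subst f[rule_format, of x y], subst g[rule_format, of x y]) (simp add: algebra_simps)
    show ?case
      by (rule bexI[of _ "\<lambda>z. f1 z + g1 z"], rule bexI[of _ "\<lambda>z. f2 z + g2 z"], (rule allI)+, rule eq)
         (simp_all add: poly_fun2.add parts)
  next
    case (mult f g)
    then obtain f1 f2 g1 g2 where
      parts: "f1 \<in> poly_fun2" "f2 \<in> poly_fun2" "g1 \<in> poly_fun2" "g2 \<in> poly_fun2"
      and f: "\<forall>x y. f (x,y) = f (a,b) + (x - a) * f1 (x,y) + (y - b) * f2 (x,y)"
      and g: "\<forall>x y. g (x,y) = g (a,b) + (x - a) * g1 (x,y) + (y - b) * g2 (x,y)"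
      by blast
    have eq: "f (x,y) * g (x,y) = f (a,b) * g (a,b)
        + (x - a) * (f1 (x,y) * g (x,y) + f (a,b) * g1 (x,y))
        + (y - b) * (f2 (x,y) * g (x,y) + f (a,b) * g2 (x,y))" for x y
    proof -
      have "f (x,y) * g (x,y) = f (a,b) * g (x,y) + ((x - a) * f1 (x,y) + (y - b) * f2 (x,y)) * g (x,y)"
        by (subst f[rule_format, of x y]) (simp add: algebra_simps)
      also have "f (a,b) * g (x,y)
          = f (a,b) * g (a,b) + f (a,b) * ((x - a) * g1 (x,y) + (y - b) * g2 (x,y))"
        by (subst g[rule_format, of x y]) (simp add: algebra_simps)
      finally show ?thesis
        by (simp add: algebra_simps)
    qed
    show ?case
      by (rule bexI[of _ "\<lambda>z. f1 z * g z + f (a,b) * g1 z"],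
          rule bexI[of _ "\<lambda>z. f2 z * g z + f (a,b) * g2 z"], (rule allI)+, rule eq)
         (simp_all add: poly_fun2.add poly_fun2.mult poly_fun2.const parts mult.hyps)
  qed
  then show ?thesis
    using that by blast
qed

lemma tendsto_exp_ii_difference_quotient:
  "((\<lambda>s::real. (exp (\<i> * of_real s) - 1) / of_real s) \<longlongrightarrow> \<i>) (at 0)"
proof -
  have "(complex_of_real \<longlongrightarrow> 0) (at 0)"
    by (auto intro!: tendsto_eq_intros)
  moreover have "((\<lambda>z. exp (\<i> * z)) has_field_derivative \<i>) (at 0)"
    by (auto intro!: derivative_eq_intros)
  then have "((\<lambda>h. (exp (\<i> * h) - 1) / h) \<longlongrightarrow> \<i>) (at 0)"
    using DERIV_D by fastforce
  ultimately have "(((\<lambda>h. (exp (\<i> * h) - 1) / h) \<circ> complex_of_real) \<longlongrightarrow> \<i>) (at 0)"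
    by (rule tendsto_compose_at) (auto simp: eventually_at_filter)
  then show ?thesis
    by (simp add: o_def)
qed

lemma nonneg_difference_quotient_limit_eq_0:
  fixes R :: "real \<Rightarrow> complex"
  assumes lim: "((\<lambda>s. R s / of_real s) \<longlongrightarrow> l) (at 0)" and nonneg: "\<And>s. 0 \<le> R s"
  shows "l = 0"
proof -
  have Re: "Re (R s / of_real s) = Re (R s) / s" and Im: "Im (R s / of_real s) = 0" for s
    using nonneg[of s] by (simp_all add: less_eq_complex_def)
  have Re_lim: "((\<lambda>s. Re (R s) / s) \<longlongrightarrow> Re l) F" if "F \<le> at 0" for F
    using tendsto_mono[OF that tendsto_Re[OF lim]] by (simp add: Re)
  have "0 \<le> Re l"
  proof (rule tendsto_lowerbound[OF Re_lim])
    show "\<forall>\<^sub>F s in at_right 0. 0 \<le> Re (R s) / s"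
      using nonneg by (auto simp: eventually_at_filter less_eq_complex_def)
  qed (simp_all add: at_le)
  moreover have "Re l \<le> 0"
  proof (rule tendsto_upperbound[OF Re_lim])
    show "\<forall>\<^sub>F s in at_left 0. Re (R s) / s \<le> 0"
      using nonneg by (auto simp: eventually_at_filter less_eq_complex_def divide_nonneg_neg)
  qed (simp_all add: at_le)
  moreover have "((\<lambda>s. 0) \<longlongrightarrow> Im l) (at (0::real))"
    using tendsto_Im[OF lim] unfolding Im .
  then have "Im l = 0"
    by (rule LIM_const_eq[symmetric])
  ultimately show ?thesis
    by (simp add: complex_eq_iff)
qed

lemma nonneg_on_circle_imp_factor_eq_0:
  fixes g u :: "complex \<Rightarrow> complex"
  assumes "norm a = 1" "isCont g a" "isCont u a" "u a \<noteq> 0"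
    and nonneg: "\<And>x. norm x = 1 \<Longrightarrow> 0 \<le> (x - a) * g x * u x"
  shows "g a = 0"
proof -
  define x where "x s = a * exp (\<i> * of_real s)" for s :: real
  have x_lim: "(x \<longlongrightarrow> a) (at 0)"
    unfolding x_def by (auto intro!: tendsto_eq_intros)
  have "(\<lambda>s. (x s - a) * g (x s) * u (x s) / of_real s)
      = (\<lambda>s. (exp (\<i> * of_real s) - 1) / of_real s * (a * g (x s) * u (x s)))"
    by (simp add: fun_eq_iff x_def algebra_simps)
  then have "((\<lambda>s. (x s - a) * g (x s) * u (x s) / of_real s) \<longlongrightarrow> \<i> * (a * g a * u a)) (at 0)"
    by (simp only:) (intro tendsto_intros tendsto_exp_ii_difference_quotient
          isCont_tendsto_compose[OF assms(2) x_lim] isCont_tendsto_compose[OF assms(3) x_lim])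
  then have "\<i> * (a * g a * u a) = 0"
    by (rule nonneg_difference_quotient_limit_eq_0) (simp add: nonneg x_def norm_mult assms(1))
  then show ?thesis
    using assms(1,4) by auto
qed

lemma norm_quadratic_form_le:
  fixes s t c1 c2 c3 c4 :: complex
  assumes "norm s \<le> d" "norm t \<le> d"
  shows "norm (s * (s * c1 + t * c2) + t * (s * c3 + t * c4))
    \<le> d\<^sup>2 * (norm c1 + norm c2 + norm c3 + norm c4)"
proof -
  have prod: "norm (a * b * c) \<le> d\<^sup>2 * norm c" if "norm a \<le> d" "norm b \<le> d" for a b c :: complex
  proof -
    have "norm a * norm b \<le> d * d"
      using that by (intro mult_mono) (auto intro: order_trans[OF norm_ge_zero])
    then show ?thesis
      by (simp add: norm_mult power2_eq_square mult_right_mono)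
  qed
  have "norm (s * (s * c1 + t * c2) + t * (s * c3 + t * c4))
      \<le> norm (s * s * c1) + norm (s * t * c2) + norm (t * s * c3) + norm (t * t * c4)"
    by (simp add: algebra_simps norm_triangle_le norm_triangle_ineq add_mono)
  also have "\<dots> \<le> d\<^sup>2 * norm c1 + d\<^sup>2 * norm c2 + d\<^sup>2 * norm c3 + d\<^sup>2 * norm c4"
    by (intro add_mono prod assms)
  finally show ?thesis
    by (simp add: algebra_simps)
qed

lemma poly_fun2_nonneg_on_torus_second_order:
  assumes "E \<in> poly_fun2" "norm a = 1" "norm b = 1" "E (a,b) = 0"
    and "isCont u (a,b)" "u (a,b) \<noteq> 0"
    and nonneg: "\<And>x y. norm x = 1 \<Longrightarrow> norm y = 1 \<Longrightarrow> 0 \<le> E (x,y) * u (x,y)"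
  obtains G where "isCont G (a,b)" "\<And>z. 0 \<le> G z"
    "\<And>x y. norm (E (x,y)) \<le> (max (norm (x - a)) (norm (y - b)))\<^sup>2 * G (x,y)"
proof -
  obtain g1 g2 where g: "g1 \<in> poly_fun2" "g2 \<in> poly_fun2"
    and E: "\<And>x y. E (x,y) = (x - a) * g1 (x,y) + (y - b) * g2 (x,y)"
    using poly_fun2_hadamard[OF assms(1), of a b] assms(4) by auto
  have slice_cont: "isCont (\<lambda>x. f (x,b)) a" "isCont (\<lambda>y. f (a,y)) b" if "isCont f (a,b)"
    for f :: "complex \<times> complex \<Rightarrow> complex"
    using that by (auto intro: isCont_o2[where g=f])
  have "0 \<le> (x - a) * g1 (x,b) * u (x,b)" if "norm x = 1" for x
    using nonneg[OF that assms(3)] by (simp add: E)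
  then have "g1 (a,b) = 0"
    using nonneg_on_circle_imp_factor_eq_0[of a "\<lambda>x. g1 (x,b)" "\<lambda>x. u (x,b)"]
      slice_cont[OF isCont_poly_fun2[OF g(1)]] slice_cont[OF assms(5)] assms(2,6) by blast
  have "0 \<le> (y - b) * g2 (a,y) * u (a,y)" if "norm y = 1" for y
    using nonneg[OF assms(2) that] by (simp add: E)
  then have "g2 (a,b) = 0"
    using nonneg_on_circle_imp_factor_eq_0[of b "\<lambda>y. g2 (a,y)" "\<lambda>y. u (a,y)"]
      slice_cont[OF isCont_poly_fun2[OF g(2)]] slice_cont[OF assms(5)] assms(3,6) by blast
  obtain g21 g22 where g2: "g21 \<in> poly_fun2" "g22 \<in> poly_fun2"
    "\<And>x y. g2 (x,y) = (x - a) * g21 (x,y) + (y - b) * g22 (x,y)"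
    using poly_fun2_hadamard[OF g(2), of a b] \<open>g2 (a,b) = 0\<close> by auto
  obtain g11 g12 where g1: "g11 \<in> poly_fun2" "g12 \<in> poly_fun2"
    "\<And>x y. g1 (x,y) = (x - a) * g11 (x,y) + (y - b) * g12 (x,y)"
    using poly_fun2_hadamard[OF g(1), of a b] \<open>g1 (a,b) = 0\<close> by auto
  define G where "G z = norm (g11 z) + norm (g12 z) + norm (g21 z) + norm (g22 z)" for z
  show ?thesis
  proof
    show "isCont G (a,b)"
      unfolding G_def using g1 g2 by (intro continuous_intros isCont_poly_fun2)
    show "0 \<le> G z" for z
      by (simp add: G_def)
    show "norm (E (x,y)) \<le> (max (norm (x - a)) (norm (y - b)))\<^sup>2 * G (x,y)" for x y
      unfolding E g1(3) g2(3) G_def by (rule norm_quadratic_form_le) auto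
  qed
qed

lemma affine_nonzero_on_disc_imp_norm_le:
  fixes a b :: complex
  assumes "\<And>w. norm w < 1 \<Longrightarrow> a + w * b \<noteq> 0"
  shows "a \<noteq> 0 \<and> norm b \<le> norm a"
proof
  show "a \<noteq> 0"
    using assms[of 0] by simp
  show "norm b \<le> norm a"
  proof (rule ccontr)
    assume "\<not> norm b \<le> norm a"
    then have "b \<noteq> 0" "norm (- a / b) < 1"
      by (auto simp: norm_divide divide_less_eq)
    then show False
      using assms[of "- a / b"] by simp
  qed
qed

lemma norm_le_on_closed_bidisc:
  fixes f g :: "complex \<times> complex \<Rightarrow> complex"
  assumes "isCont f (x,y)" "isCont g (x,y)" "norm x \<le> 1" "norm y \<le> 1"
    and le: "\<And>x y. norm x < 1 \<Longrightarrow> norm y < 1 \<Longrightarrow> norm (f (x,y)) \<le> norm (g (x,y))"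
  shows "norm (f (x,y)) \<le> norm (g (x,y))"
proof -
  have lim: "((\<lambda>r. (of_real r * x, of_real r * y)) \<longlongrightarrow> (x,y)) (at_left 1)"
    by (auto intro!: tendsto_eq_intros)
  have shrink: "norm (of_real r * z) < 1" if "0 < r" "r < 1" "norm z \<le> 1" for r and z :: complex
  proof -
    have "norm (of_real r * z) = r * norm z"
      using that(1) by (simp add: norm_mult)
    also have "\<dots> \<le> r"
      using that mult_left_le[of "norm z" r] by simp
    finally show ?thesis
      using that(2) by simp
  qed
  show ?thesis
  proof (rule tendsto_le[OF _ tendsto_norm[OF isCont_tendsto_compose[OF assms(2) lim]]
                             tendsto_norm[OF isCont_tendsto_compose[OF assms(1) lim]]])
    show "\<forall>\<^sub>F r in at_left 1. norm (f (of_real r * x, of_real r * y)) \<le> norm (g (of_real r * x, of_real r * y))"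
      by (rule eventually_mono[OF eventually_at_left_real[where a=1 and b=0]]) (use assms(3,4) in \<open>auto intro!: le shrink\<close>)
  qed simp
qed

lemma lin3_zero_free_bidisc:
  assumes "is_poly2 p1" "is_poly2 p2" "\<forall>z\<in>polydisc3. eval3 (lin3 p1 p2) z \<noteq> 0"
    and "norm x < 1" "norm y < 1"
  shows "eval2 p1 x y \<noteq> 0 \<and> norm (eval2 p2 x y) \<le> norm (eval2 p1 x y)"
  using assms by (intro affine_nonzero_on_disc_imp_norm_le) (auto simp: polydisc3_def eval3_lin3)

lemma lin3_zero_free_torus:
  assumes "is_poly2 p1" "is_poly2 p2" "\<forall>z\<in>polydisc3. eval3 (lin3 p1 p2) z \<noteq> 0"
    and "norm x = 1" "norm y = 1"
  shows "norm (eval2 p2 x y) \<le> norm (eval2 p1 x y)"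
  using norm_le_on_closed_bidisc[where f="case_prod (eval2 p2)" and g="case_prod (eval2 p1)"]
    lin3_zero_free_bidisc[OF assms(1-3)] assms(4,5)
  by (simp add: isCont_poly_fun2 poly_fun2_eval2)

lemma infinite_unit_circle: "infinite (sphere (0::complex) 1)"
proof -
  have "uncountable (sphere (0::complex) 1)"
    by (rule connected_uncountable[of _ 1 "-1"]) (auto simp: connected_sphere)
  then show ?thesis
    using countable_finite by blast
qed

lemma lin3_torus_zero_norm_eq:
  assumes "is_poly2 p1" "is_poly2 p2"
    and finite: "finite {z \<in> torus3. eval3 (lin3 p1 p2) z = 0}"
    and "(a,b,c) \<in> torus3" "eval3 (lin3 p1 p2) (a,b,c) = 0"
  shows "eval2 p1 a b \<noteq> 0 \<and> norm (eval2 p2 a b) = norm (eval2 p1 a b)"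
proof -
  have zero: "eval2 p1 a b = - c * eval2 p2 a b" and "norm c = 1"
    using assms(4,5) by (auto simp: eval3_lin3 assms(1,2) torus3_def add_eq_0_iff)
  have "eval2 p1 a b \<noteq> 0"
  proof
    assume "eval2 p1 a b = 0"
    then have "(\<lambda>w. (a,b,w)) ` sphere 0 1 \<subseteq> {z \<in> torus3. eval3 (lin3 p1 p2) z = 0}"
      using zero \<open>norm c = 1\<close> assms(4) by (auto simp: torus3_def eval3_lin3 assms(1,2))
    then have "finite ((\<lambda>w. (a,b,w)) ` sphere (0::complex) 1)"
      using finite finite_subset by blast
    then show False
      using infinite_unit_circle finite_imageD[of "\<lambda>w. (a,b,w)"] by (auto simp: inj_on_def)
  qed
  then show ?thesis
    using zero \<open>norm c = 1\<close> by (simp add: norm_mult)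
qed

lemma eval2_refl2_ratio_at_equal_norms:
  assumes "is_poly2 p1" "is_poly2 p2" "deg_le2 p1 m n" "deg_le2 p2 m n" "norm a = 1" "norm b = 1"
    and "eval2 p1 a b \<noteq> 0" "norm (eval2 p2 a b) = norm (eval2 p1 a b)"
  defines "L \<equiv> eval2 (refl2 m n p2) a b / eval2 p1 a b"
  shows "norm L = 1 \<and> eval2 (refl2 m n p1) a b = L * eval2 p2 a b"
proof -
  define u where "u = a^m * b^n"
  have "norm u = 1"
    using assms(5,6) by (simp add: u_def norm_mult norm_power)
  have Q: "eval2 (refl2 m n p1) a b = u * cnj (eval2 p1 a b)"
       "eval2 (refl2 m n p2) a b = u * cnj (eval2 p2 a b)"
    using eval2_refl2_unimodular assms(1-6) by (simp_all add: u_def)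
  have "eval2 p2 a b * cnj (eval2 p2 a b) = eval2 p1 a b * cnj (eval2 p1 a b)"
    using assms(8) by (metis complex_norm_square)
  then have "L * eval2 p2 a b = u * cnj (eval2 p1 a b)"
    using assms(7) by (simp add: L_def Q field_simps)
  moreover have "norm L = 1"
    using assms(7,8) \<open>norm u = 1\<close> by (simp add: L_def Q norm_mult norm_divide)
  ultimately show ?thesis
    by (simp add: Q)
qed

definition cross_defect :: "nat \<Rightarrow> nat \<Rightarrow> cpoly2 \<Rightarrow> cpoly2 \<Rightarrow> complex \<times> complex \<Rightarrow> complex" where
  "cross_defect m n p1 p2 = (\<lambda>(x,y).
     eval2 p1 x y * eval2 (refl2 m n p1) x y - eval2 p2 x y * eval2 (refl2 m n p2) x y)"

lemma poly_fun2_cross_defect: "cross_defect m n p1 p2 \<in> poly_fun2"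
proof -
  have "(\<lambda>z. case_prod (eval2 p1) z * case_prod (eval2 (refl2 m n p1)) z
          - case_prod (eval2 p2) z * case_prod (eval2 (refl2 m n p2)) z) \<in> poly_fun2"
    by (intro poly_fun2_diff poly_fun2.mult poly_fun2_eval2)
  then show ?thesis
    by (simp add: cross_defect_def case_prod_beta')
qed

lemma cross_defect_unimodular:
  assumes "is_poly2 p1" "is_poly2 p2" "deg_le2 p1 m n" "deg_le2 p2 m n" "norm x = 1" "norm y = 1"
  shows "cross_defect m n p1 p2 (x,y) * cnj (x^m * y^n)
         = of_real ((norm (eval2 p1 x y))\<^sup>2 - (norm (eval2 p2 x y))\<^sup>2)"
proof -
  define u where "u = x^m * y^n"
  have "u * cnj u = 1"
    using assms(5,6) by (intro mult_cnj_unimodular) (simp add: u_def norm_mult norm_power)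
  have Q: "eval2 (refl2 m n p1) x y = u * cnj (eval2 p1 x y)"
       "eval2 (refl2 m n p2) x y = u * cnj (eval2 p2 x y)"
    using eval2_refl2_unimodular assms by (simp_all add: u_def)
  have "cross_defect m n p1 p2 (x,y) * cnj u
      = (u * cnj u) * (eval2 p1 x y * cnj (eval2 p1 x y) - eval2 p2 x y * cnj (eval2 p2 x y))"
    by (simp add: cross_defect_def Q algebra_simps)
  also have "\<dots> = of_real ((norm (eval2 p1 x y))\<^sup>2 - (norm (eval2 p2 x y))\<^sup>2)"
    unfolding \<open>u * cnj u = 1\<close> by (simp flip: complex_norm_square)
  finally show ?thesis
    by (simp add: u_def)
qed

lemma cross_defect_second_order:
  assumes "is_poly2 p1" "is_poly2 p2" "deg_le2 p1 m n" "deg_le2 p2 m n"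
    and "\<forall>z\<in>polydisc3. eval3 (lin3 p1 p2) z \<noteq> 0"
    and "norm a = 1" "norm b = 1" "norm (eval2 p2 a b) = norm (eval2 p1 a b)"
  obtains G where "isCont G (a,b)" "\<And>z. 0 \<le> G z"
    "\<And>x y. norm (cross_defect m n p1 p2 (x,y)) \<le> (max (norm (x - a)) (norm (y - b)))\<^sup>2 * G (x,y)"
proof (rule poly_fun2_nonneg_on_torus_second_order[OF poly_fun2_cross_defect assms(6,7)])
  define u where "u z = cnj (fst z ^ m * snd z ^ n)" for z :: "complex \<times> complex"
  show "isCont u (a,b)"
    unfolding u_def[abs_def] by (intro continuous_intros)
  show "u (a,b) \<noteq> 0"
    using assms(6,7) by (auto simp: u_def)
  show "0 \<le> cross_defect m n p1 p2 (x,y) * u (x,y)" if "norm x = 1" "norm y = 1" for x y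
    using cross_defect_unimodular[OF assms(1-4) that] lin3_zero_free_torus[OF assms(1,2,5) that]
    by (simp add: u_def less_eq_complex_def power_mono)
  show "cross_defect m n p1 p2 (a,b) = 0"
    using cross_defect_unimodular[OF assms(1-4,6,7)] assms(6-8) by (auto simp: norm_mult norm_power)
qed (rule that)

lemma norm_linear_fractional_diff_le:
  fixes a1 a2 q1 q2 w L :: complex
  assumes "a1 \<noteq> 0" "a2 \<noteq> 0" "norm a2 \<le> norm a1" "norm w \<le> 1 - d" "0 < d"
  shows "norm ((q2 + w * q1) / (a1 + w * a2) - L)
    \<le> norm ((q1 - L * a2) / a2) + norm (a1 * q1 - a2 * q2) / (d * norm a1 * norm a2)"
proof -
  define D where "D = a1 + w * a2"
  have "0 \<le> 1 - d"
    using norm_ge_zero[of w] assms(4) by linarith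
  then have "norm (w * a2) \<le> (1 - d) * norm a1"
    unfolding norm_mult using assms(3,4) by (intro mult_mono) auto
  then have D_ge: "d * norm a1 \<le> norm D"
    using norm_triangle_ineq2[of a1 "- (w * a2)"] by (simp add: D_def algebra_simps)
  moreover have "0 < d * norm a1"
    using assms(1,5) by simp
  ultimately have "D \<noteq> 0"
    by auto
  have "(q2 + w * q1) / D - L = (q1 - L * a2) / a2 - (a1 * q1 - a2 * q2) / (a2 * D)"
    using \<open>D \<noteq> 0\<close> assms(2) by (simp add: field_simps) (simp add: D_def algebra_simps)
  then have "norm ((q2 + w * q1) / D - L)
      \<le> norm ((q1 - L * a2) / a2) + norm (a1 * q1 - a2 * q2) / (norm a2 * norm D)"
    by (metis norm_divide norm_mult norm_triangle_ineq4)
  also have "norm (a1 * q1 - a2 * q2) / (norm a2 * norm D)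
      \<le> norm (a1 * q1 - a2 * q2) / (d * norm a1 * norm a2)"
    using D_ge \<open>D \<noteq> 0\<close> assms(1,2,5)
    by (intro divide_left_mono) (auto simp: mult.commute mult.left_commute mult_left_mono)
  finally show ?thesis
    by (simp add: D_def)
qed

lemma maxnorm3_eq: "maxnorm3 z = max (norm (fst z)) (max (norm (fst (snd z))) (norm (snd (snd z))))"
  by (simp add: maxnorm3_def split: prod.split)

lemma nt_region_bounds:
  assumes "(x,y,w) \<in> nt_region C (a,b,c)"
  defines "d \<equiv> 1 - maxnorm3 (x,y,w)"
  shows "norm x < 1" "norm y < 1" "0 < d" "norm w \<le> 1 - d"
    "max (norm (x - a)) (norm (y - b)) \<le> C * d"
proof -
  have "norm x < 1" "norm y < 1" "norm w < 1"
    using assms(1) by (auto simp: nt_region_def polydisc3_def)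
  then show "norm x < 1" "norm y < 1" "0 < d" "norm w \<le> 1 - d"
    by (simp_all add: d_def maxnorm3_def)
  show "max (norm (x - a)) (norm (y - b)) \<le> C * d"
    using assms(1) by (auto simp: nt_region_def d_def maxnorm3_def)
qed

lemma nt_region_linear_fractional_diff_le:
  fixes a1 a2 q1 q2 L :: complex
  assumes "(x,y,w) \<in> nt_region C (a,b,c)" "a1 \<noteq> 0" "a2 \<noteq> 0" "norm a2 \<le> norm a1" "0 \<le> g"
    and E: "norm (a1 * q1 - a2 * q2) \<le> (max (norm (x - a)) (norm (y - b)))\<^sup>2 * g"
  shows "norm ((q2 + w * q1) / (a1 + w * a2) - L)
    \<le> norm ((q1 - L * a2) / a2) + C\<^sup>2 * (1 - maxnorm3 (x,y,w)) * g / (norm a1 * norm a2)"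
proof -
  define d where "d = 1 - maxnorm3 (x,y,w)"
  note bounds = nt_region_bounds[OF assms(1), folded d_def]
  have "(max (norm (x - a)) (norm (y - b)))\<^sup>2 \<le> (C * d)\<^sup>2"
    using bounds(5) by (intro power_mono) (auto simp: le_max_iff_disj)
  then have "norm (a1 * q1 - a2 * q2) \<le> (C * d)\<^sup>2 * g"
    using E mult_right_mono[OF _ assms(5)] by (meson order_trans)
  then have "norm (a1 * q1 - a2 * q2) / (d * norm a1 * norm a2)
      \<le> (C * d)\<^sup>2 * g / (d * norm a1 * norm a2)"
    using assms(2,3) bounds(3) by (simp add: divide_right_mono)
  also have "\<dots> = C\<^sup>2 * d * g / (norm a1 * norm a2)"
    using bounds(3) by (simp add: power2_eq_square)
  finally show ?thesis
    using norm_linear_fractional_diff_le[OF assms(2-4) bounds(4,3), of q2 q1 L]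
    by (simp add: d_def)
qed

lemma nt_limit_linear_fractional:
  fixes P P' Q Q' :: "complex \<Rightarrow> complex \<Rightarrow> complex" and G :: "complex \<times> complex \<Rightarrow> real"
  assumes cont: "isCont (case_prod P) (a,b)" "isCont (case_prod P') (a,b)" "isCont (case_prod Q) (a,b)"
      "isCont G (a,b)" "\<And>z. 0 \<le> G z"
    and bidisc: "\<And>x y. norm x < 1 \<Longrightarrow> norm y < 1 \<Longrightarrow> P x y \<noteq> 0 \<and> norm (P' x y) \<le> norm (P x y)"
    and "maxnorm3 (a,b,c) = 1" "P a b \<noteq> 0" "P' a b \<noteq> 0" "Q a b = L * P' a b"
    and E: "\<And>x y. norm (P x y * Q x y - P' x y * Q' x y) \<le> (max (norm (x - a)) (norm (y - b)))\<^sup>2 * G (x,y)"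
  shows "nt_limit (\<lambda>(x,y,w). (Q' x y + w * Q x y) / (P x y + w * P' x y)) (a,b,c) L"
  unfolding nt_limit_def
proof (intro allI impI)
  fix C :: real
  assume "C > 0"
  define T where "T = (a,b,c)"
  define F where "F z = (let x = fst z; y = fst (snd z); d = 1 - maxnorm3 z in
      norm ((Q x y - L * P' x y) / P' x y) + C\<^sup>2 * d * G (x,y) / (norm (P x y) * norm (P' x y)))" for z
  let ?\<phi> = "\<lambda>(x,y,w). (Q' x y + w * Q x y) / (P x y + w * P' x y)"
  let ?F = "at T within nt_region C T"
  have xy_lim: "((\<lambda>z. (fst z, fst (snd z))) \<longlongrightarrow> (a,b)) ?F"
    by (auto simp: T_def intro!: tendsto_eq_intros)
  have lim: "((\<lambda>z. f (fst z) (fst (snd z))) \<longlongrightarrow> f a b) ?F" if "isCont (case_prod f) (a,b)"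
    for f :: "complex \<Rightarrow> complex \<Rightarrow> complex"
    using isCont_tendsto_compose[OF that xy_lim] by simp
  have "(F \<longlongrightarrow> norm ((Q a b - L * P' a b) / P' a b)
                 + C\<^sup>2 * (1 - maxnorm3 T) * G (a,b) / (norm (P a b) * norm (P' a b))) ?F"
    unfolding F_def Let_def maxnorm3_eq[abs_def]
    by (intro tendsto_intros lim cont isCont_tendsto_compose[OF cont(4) xy_lim])
       (auto simp: assms(8,9) maxnorm3_eq[symmetric])
  then have F_lim: "(F \<longlongrightarrow> 0) ?F"
    using assms(7,10) by (simp add: T_def)
  have P'_ne: "\<forall>\<^sub>F z in ?F. P' (fst z) (fst (snd z)) \<noteq> 0"
    using tendsto_imp_eventually_ne[OF lim[OF cont(2)] assms(9)] .
  have "norm (?\<phi> z - L) \<le> F z"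
    if "z \<in> nt_region C T" and "P' (fst z) (fst (snd z)) \<noteq> 0" for z
  proof (cases z)
    case (fields x y w)
    then have "P x y \<noteq> 0" "norm (P' x y) \<le> norm (P x y)"
      using that(1) nt_region_bounds(1,2) bidisc by (auto simp: T_def)
    then show ?thesis
      using that fields
      by (auto simp: F_def T_def intro!: nt_region_linear_fractional_diff_le E cont(5))
  qed
  with P'_ne have "\<forall>\<^sub>F z in ?F. norm (?\<phi> z - L) \<le> F z"
    by (auto simp: eventually_at_filter elim: eventually_mono)
  then have "((\<lambda>z. ?\<phi> z - L) \<longlongrightarrow> 0) ?F"
    using F_lim by (rule Lim_null_comparison)
  then show "(?\<phi> \<longlongrightarrow> L) (at (a,b,c) within nt_region C (a,b,c))"
    unfolding T_def by (rule LIM_zero_cancel)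
qed

theorem corollary4p3:
  fixes m n :: nat and p1 p2 :: cpoly2 and \<tau>1 \<tau>2 \<zeta>3 :: complex
  defines "p \<equiv> lin3 p1 p2"
  defines "pt \<equiv> refl3 m n 1 p"
  defines "\<phi> \<equiv> (\<lambda>z. eval3 pt z / eval3 p z)"
  assumes poly: "is_poly2 p1" "is_poly2 p2"
      and degle: "deg_le2 p1 m n" "deg_le2 p2 m n"
      and deg: "deg3 pt = (m, n, 1)"
      and zerofree: "\<forall>z\<in>polydisc3. eval3 p z \<noteq> 0"
      and coprime: "\<not> common_factor3 p pt"
      and irred: "irreducible3 p"
      and finite_zeros: "finite {z \<in> torus3. eval3 p z = 0}"
      and zero: "(\<tau>1, \<tau>2, \<zeta>3) \<in> torus3" "eval3 p (\<tau>1, \<tau>2, \<zeta>3) = 0"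
  shows "\<forall>\<tau>3. norm \<tau>3 = 1 \<longrightarrow>
           nt_limit \<phi> (\<tau>1, \<tau>2, \<tau>3) (eval2 (refl2 m n p2) \<tau>1 \<tau>2 / eval2 p1 \<tau>1 \<tau>2)
         \<and> norm (eval2 (refl2 m n p2) \<tau>1 \<tau>2 / eval2 p1 \<tau>1 \<tau>2) = 1"
proof -
  define L where "L = eval2 (refl2 m n p2) \<tau>1 \<tau>2 / eval2 p1 \<tau>1 \<tau>2"
  have tor: "norm \<tau>1 = 1" "norm \<tau>2 = 1"
    using zero(1) by (auto simp: torus3_def)
  have at_zero: "eval2 p1 \<tau>1 \<tau>2 \<noteq> 0 \<and> norm (eval2 p2 \<tau>1 \<tau>2) = norm (eval2 p1 \<tau>1 \<tau>2)"
    using lin3_torus_zero_norm_eq[OF poly] finite_zeros zero by (simp add: p_def)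
  then have L: "norm L = 1 \<and> eval2 (refl2 m n p1) \<tau>1 \<tau>2 = L * eval2 p2 \<tau>1 \<tau>2"
    unfolding L_def by (intro eval2_refl2_ratio_at_equal_norms poly degle tor) auto
  obtain G where G: "isCont G (\<tau>1,\<tau>2)" "\<And>z. 0 \<le> G z"
    "\<And>x y. norm (cross_defect m n p1 p2 (x,y)) \<le> (max (norm (x - \<tau>1)) (norm (y - \<tau>2)))\<^sup>2 * G (x,y)"
    using cross_defect_second_order[OF poly degle zerofree[unfolded p_def] tor] at_zero by blast
  have "eval3 pt (x,y,w) = eval2 (refl2 m n p2) x y + w * eval2 (refl2 m n p1) x y" for x y w
    unfolding pt_def p_def by (rule eval3_refl3_lin3[OF poly])
  then have \<phi>_eq: "\<phi> = (\<lambda>(x,y,w). (eval2 (refl2 m n p2) x y + w * eval2 (refl2 m n p1) x y)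
                          / (eval2 p1 x y + w * eval2 p2 x y))"
    by (auto simp: fun_eq_iff \<phi>_def p_def eval3_lin3 poly)
  have "nt_limit \<phi> (\<tau>1,\<tau>2,\<tau>3) L" if "norm \<tau>3 = 1" for \<tau>3
    unfolding \<phi>_eq
    by (rule nt_limit_linear_fractional[where P = "eval2 p1" and P' = "eval2 p2"
          and Q = "eval2 (refl2 m n p1)" and Q' = "eval2 (refl2 m n p2)"])
       (use G lin3_zero_free_bidisc[OF poly zerofree[unfolded p_def]] that tor at_zero L in
         \<open>auto simp: isCont_poly_fun2 poly_fun2_eval2 maxnorm3_def cross_defect_def\<close>)
  then show ?thesis
    using L by (simp add: L_def)
qed

end
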